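(* In every Choi-defined resource theory, for every system $A$ the maximally mixed state $\frac{1}{d_A}\mathbb{1}_A$ is a free state.
   Context: A quantum resource theory specifies, for all finite-dimensional systems, a set of free channels containing the identity, swap and discarding (partial trace) channels and closed under sequential and parallel composition; free states are those preparable by free channels, and the family of free states is closed under tensor product, partial trace and system swaps. For a channel $\mathcal{M}_{A\to B}$ its renormalized Choi matrix is $\frac{1}{d_A}(\mathcal{M}_{A\to B}\otimes\mathcal{I}_{A'})(\Phi_{AA'})$, where $A'$ is a copy of $A$, $d_A=\dim A$ and $\Phi_{AA'}=\sum_{x,y}|x\rangle\langle y|_A\otimes|x\rangle\langle y|_{A'}$ for a fixed orthonormal basis. A Choi-defined resource theory (CDRT) is a resource theory in which a channel is free if and only if its renormalized Choi matrix is a free state. *)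

theory Defs
  imports Complex_Main "Jordan_Normal_Form.Matrix"
begin

text \<open>Systems are modelled by their (positive) dimension. A composite system A B of
dimensions a and b has dimension a*b, with basis index (i,k) encoded as i*b+k.\<close>

definition mtrace :: "complex mat \<Rightarrow> complex" where
  "mtrace X = (\<Sum>i<dim_row X. X $$ (i,i))"

definition unitE :: "nat \<Rightarrow> nat \<Rightarrow> nat \<Rightarrow> complex mat" where
  "unitE n i j = mat n n (\<lambda>(r,s). if r = i \<and> s = j then 1 else 0)"

definition kron :: "complex mat \<Rightarrow> complex mat \<Rightarrow> complex mat" where
  "kron A B = mat (dim_row A * dim_row B) (dim_col A * dim_col B)
     (\<lambda>(i,j). A $$ (i div dim_row B, j div dim_col B) * B $$ (i mod dim_row B, j mod dim_col B))"

text \<open>parallel composition M (x) N of maps M : a -> b and N : c -> d, defined by linearity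
on matrix units\<close>
definition par :: "nat \<Rightarrow> nat \<Rightarrow> nat \<Rightarrow> nat \<Rightarrow> (complex mat \<Rightarrow> complex mat)
    \<Rightarrow> (complex mat \<Rightarrow> complex mat) \<Rightarrow> complex mat \<Rightarrow> complex mat" where
  "par a b c d M N X = mat (b*d) (b*d) (\<lambda>(r,s).
     \<Sum>i<a. \<Sum>j<a. \<Sum>k<c. \<Sum>l<c.
        X $$ (i*c+k, j*c+l) * kron (M (unitE a i j)) (N (unitE c k l)) $$ (r,s))"

definition swap_ch :: "nat \<Rightarrow> nat \<Rightarrow> complex mat \<Rightarrow> complex mat" where
  "swap_ch a b X = mat (b*a) (b*a)
     (\<lambda>(r,s). X $$ ((r mod a)*b + r div a, (s mod a)*b + s div a))"

definition ptrace2 :: "nat \<Rightarrow> nat \<Rightarrow> complex mat \<Rightarrow> complex mat" where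
  "ptrace2 a b X = mat a a (\<lambda>(i,j). \<Sum>k<b. X $$ (i*b+k, j*b+k))"

definition psd :: "nat \<Rightarrow> complex mat \<Rightarrow> bool" where
  "psd n P \<longleftrightarrow> P \<in> carrier_mat n n \<and>
     (\<forall>v :: nat \<Rightarrow> complex. let q = (\<Sum>i<n. \<Sum>j<n. cnj (v i) * P $$ (i,j) * v j)
        in Im q = 0 \<and> Re q \<ge> 0)"

definition channel :: "nat \<Rightarrow> nat \<Rightarrow> (complex mat \<Rightarrow> complex mat) \<Rightarrow> bool" where
  "channel a b M \<longleftrightarrow>
     (\<forall>X \<in> carrier_mat a a. M X \<in> carrier_mat b b) \<and>
     (\<forall>X \<in> carrier_mat a a. \<forall>Y \<in> carrier_mat a a. M (X + Y) = M X + M Y) \<and>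
     (\<forall>X \<in> carrier_mat a a. \<forall>c. M (c \<cdot>\<^sub>m X) = c \<cdot>\<^sub>m M X) \<and>
     (\<forall>X \<in> carrier_mat a a. mtrace (M X) = mtrace X) \<and>
     (\<forall>k P. 0 < k \<longrightarrow> psd (a*k) P \<longrightarrow> psd (b*k) (par a b k k M id P))"

text \<open>free states of dimension d: those preparable by a free channel from the trivial system\<close>
definition free_state :: "(nat \<Rightarrow> nat \<Rightarrow> (complex mat \<Rightarrow> complex mat) \<Rightarrow> bool)
    \<Rightarrow> nat \<Rightarrow> complex mat \<Rightarrow> bool" where
  "free_state F d \<rho> \<longleftrightarrow> (\<exists>M. F 1 d M \<and> \<rho> = M (1\<^sub>m 1))"

text \<open>F a b M: M is a free channel from the system of dimension a to that of dimension b\<close>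
definition resource_theory :: "(nat \<Rightarrow> nat \<Rightarrow> (complex mat \<Rightarrow> complex mat) \<Rightarrow> bool) \<Rightarrow> bool" where
  "resource_theory F \<longleftrightarrow>
     (\<forall>a b M. F a b M \<longrightarrow> 0 < a \<and> 0 < b \<and> channel a b M) \<and>
     (\<forall>a. 0 < a \<longrightarrow> F a a id) \<and>
     (\<forall>a b. 0 < a \<longrightarrow> 0 < b \<longrightarrow> F (a*b) (b*a) (swap_ch a b)) \<and>
     (\<forall>a b. 0 < a \<longrightarrow> 0 < b \<longrightarrow> F (a*b) a (ptrace2 a b)) \<and>
     (\<forall>a b c M N. F a b M \<longrightarrow> F b c N \<longrightarrow> F a c (N \<circ> M)) \<and>
     (\<forall>a b c d M N. F a b M \<longrightarrow> F c d N \<longrightarrow> F (a*c) (b*d) (par a b c d M N)) \<and>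
     (\<forall>a b \<rho> \<sigma>. free_state F a \<rho> \<longrightarrow> free_state F b \<sigma> \<longrightarrow> free_state F (a*b) (kron \<rho> \<sigma>)) \<and>
     (\<forall>a b \<rho>. 0 < a \<longrightarrow> 0 < b \<longrightarrow> free_state F (a*b) \<rho> \<longrightarrow> free_state F a (ptrace2 a b \<rho>)) \<and>
     (\<forall>a b \<rho>. 0 < a \<longrightarrow> 0 < b \<longrightarrow> free_state F (a*b) \<rho> \<longrightarrow> free_state F (b*a) (swap_ch a b \<rho>))"

text \<open>unnormalized maximally entangled Phi_{AA'} = sum_{x,y} |x><y| (x) |x><y|\<close>
definition Phi :: "nat \<Rightarrow> complex mat" where
  "Phi a = mat (a*a) (a*a) (\<lambda>(r,s). if r div a = r mod a \<and> s div a = s mod a then 1 else 0)"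

text \<open>renormalized Choi matrix (1/d_A) (M (x) I_{A'})(Phi_{AA'}), on the system B A'\<close>
definition choi :: "nat \<Rightarrow> nat \<Rightarrow> (complex mat \<Rightarrow> complex mat) \<Rightarrow> complex mat" where
  "choi a b M = (1 / of_nat a) \<cdot>\<^sub>m par a b a a M id (Phi a)"

definition CDRT :: "(nat \<Rightarrow> nat \<Rightarrow> (complex mat \<Rightarrow> complex mat) \<Rightarrow> bool) \<Rightarrow> bool" where
  "CDRT F \<longleftrightarrow> resource_theory F \<and>
     (\<forall>a b M. 0 < a \<longrightarrow> 0 < b \<longrightarrow> channel a b M \<longrightarrow>
        (F a b M \<longleftrightarrow> free_state F (b*a) (choi a b M)))"

end

theory Submission
  imports Defs
begin

text \<open>The identity channel is free, so in a Choi-defined resource theory its renormalized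
Choi matrix, the normalized maximally entangled state \<open>\<Phi>/d\<close>, is a free state. Its
marginal is the maximally mixed state, and marginals of free states are free.\<close>

lemma pair_index_less:
  fixes i k a b :: nat
  assumes "i < a" "k < b"
  shows "i * b + k < a * b"
proof -
  have "i * b + k < Suc i * b"
    using assms(2) by simp
  also have "\<dots> \<le> a * b"
    using assms(1) by (intro mult_right_mono) simp_all
  finally show ?thesis .
qed

lemma kron_unitE_index:
  assumes "r < a * c" "s < a * c"
  shows "kron (unitE a i j) (unitE c k l) $$ (r, s) =
    (if l = s mod c then if k = r mod c then if j = s div c then if i = r div c
     then 1 else 0 else 0 else 0 else 0)"
proof -
  have "r div c < a" "s div c < a"
    using assms by (simp_all add: less_mult_imp_div_less)
  moreover have "r mod c < c" "s mod c < c"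
    using assms by (metis mod_less_divisor mult_0_right neq0_conv not_less0)+
  ultimately show ?thesis
    using assms by (auto simp: kron_def unitE_def)
qed

lemma par_id_id:
  assumes X: "X \<in> carrier_mat (a * c) (a * c)"
  shows "par a a c c id id X = X"
proof (rule eq_matI)
  show "dim_row (par a a c c id id X) = dim_row X" "dim_col (par a a c c id id X) = dim_col X"
    using X by (simp_all add: par_def)
  fix r s assume "r < dim_row X" "s < dim_col X"
  then have r: "r < a * c" and s: "s < a * c"
    using X by simp_all
  have "r div c < a" "s div c < a"
    using r s by (simp_all add: less_mult_imp_div_less)
  moreover have "r mod c < c" "s mod c < c"
    using r s by (metis mod_less_divisor mult_0_right neq0_conv not_less0)+
  moreover have "par a a c c id id X $$ (r, s) = (\<Sum>i<a. \<Sum>j<a. \<Sum>k<c. \<Sum>l<c.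
      if l = s mod c then if k = r mod c then if j = s div c then if i = r div c
      then X $$ (i * c + k, j * c + l) else 0 else 0 else 0 else 0)"
    using r s by (simp only: par_def index_mat split id_apply kron_unitE_index)
      (intro sum.cong refl; simp)
  ultimately have "par a a c c id id X $$ (r, s) =
      X $$ (r div c * c + r mod c, s div c * c + s mod c)"
    by (simp add: sum.delta)
  then show "par a a c c id id X $$ (r, s) = X $$ (r, s)"
    by simp
qed

lemma Phi_carrier: "Phi a \<in> carrier_mat (a * a) (a * a)"
  by (simp add: Phi_def)

lemma choi_id: "choi a a id = (1 / of_nat a) \<cdot>\<^sub>m Phi a"
  by (simp add: choi_def Phi_def par_id_id)

lemma ptrace2_smult:
  assumes "X \<in> carrier_mat (a * b) (a * b)"
  shows "ptrace2 a b (c \<cdot>\<^sub>m X) = c \<cdot>\<^sub>m ptrace2 a b X"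
  using assms by (auto simp: ptrace2_def pair_index_less sum_distrib_left intro!: eq_matI)

lemma ptrace2_Phi: "ptrace2 a a (Phi a) = 1\<^sub>m a"
proof (rule eq_matI)
  fix i j assume "i < dim_row (1\<^sub>m a)" "j < dim_col (1\<^sub>m a)"
  then have i: "i < a" and j: "j < a"
    by simp_all
  have "ptrace2 a a (Phi a) $$ (i, j) = (\<Sum>k<a. Phi a $$ (i * a + k, j * a + k))"
    using i j by (simp add: ptrace2_def)
  also have "\<dots> = (\<Sum>k<a. if k = i then if k = j then 1 else 0 else 0)"
    using i j by (intro sum.cong refl) (auto simp: Phi_def pair_index_less)
  also have "\<dots> = 1\<^sub>m a $$ (i, j)"
    using i j by (simp add: sum.delta)
  finally show "ptrace2 a a (Phi a) $$ (i, j) = 1\<^sub>m a $$ (i, j)" .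
qed (simp_all add: ptrace2_def)

lemma ptrace2_choi_id: "ptrace2 a a (choi a a id) = (1 / of_nat a) \<cdot>\<^sub>m 1\<^sub>m a"
  by (simp add: choi_id ptrace2_smult[OF Phi_carrier] ptrace2_Phi)

lemma resource_theory_free_id: "resource_theory F \<Longrightarrow> 0 < a \<Longrightarrow> F a a id"
  by (simp add: resource_theory_def)

lemma resource_theory_free_state_ptrace2:
  "resource_theory F \<Longrightarrow> 0 < a \<Longrightarrow> 0 < b \<Longrightarrow> free_state F (a * b) \<rho> \<Longrightarrow>
    free_state F a (ptrace2 a b \<rho>)"
  unfolding resource_theory_def by blast

lemma CDRT_free_state_choi:
  assumes "CDRT F" "F a b M"
  shows "free_state F (b * a) (choi a b M)"
proof -
  have "resource_theory F"
    using assms(1) by (simp add: CDRT_def)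
  then have "0 < a" "0 < b" "channel a b M"
    using assms(2) by (simp_all add: resource_theory_def)
  then show ?thesis
    using assms by (simp add: CDRT_def)
qed

theorem corollary1:
  fixes F :: "nat \<Rightarrow> nat \<Rightarrow> (complex mat \<Rightarrow> complex mat) \<Rightarrow> bool"
    and d :: nat
  assumes "CDRT F" and "0 < d"
  shows "free_state F d ((1 / of_nat d) \<cdot>\<^sub>m 1\<^sub>m d)"
proof -
  have rt: "resource_theory F"
    using assms(1) by (simp add: CDRT_def)
  then have "F d d id"
    using assms(2) by (rule resource_theory_free_id)
  then have "free_state F (d * d) (choi d d id)"
    using assms(1) by (intro CDRT_free_state_choi)
  then have "free_state F d (ptrace2 d d (choi d d id))"
    using rt assms(2) by (intro resource_theory_free_state_ptrace2)
  then show ?thesis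
    by (simp add: ptrace2_choi_id)
qed

end
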